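(* Let $M,N\ge1$, let $T_1,\dots,T_N\in\mathcal{L}(\ell^\infty_M,\mathbb{R})$, let $\mathscr{T}=\{T_n:1\le n\le N\}$, and let $A:\ell^\infty_M\to\ell^\infty_N$ be given by $Ax=(T_nx)_{n=1}^N$. Then $\mathcal{R}(\mathscr{T})=C_2(A)$ and $\mathcal{R}^\gamma(\mathscr{T})=C_2^\gamma(A)$.
   Context: $(r_n)$ is a Rademacher sequence and $(\gamma_n)$ a sequence of independent standard Gaussians. For a family $\mathscr{T}\subseteq\mathcal{L}(X,Y)$, the $R$-bound $\mathcal{R}(\mathscr{T})$ is the least $C$ such that $(\mathbb{E}\|\sum_{n=1}^k r_nS_nx_n\|^2)^{1/2}\le C(\mathbb{E}\|\sum_{n=1}^k r_nx_n\|^2)^{1/2}$ for all $k$, all $S_1,\dots,S_k\in\mathscr{T}$ (not necessarily distinct) and all $x_1,\dots,x_k\in X$; the $\gamma$-bound $\mathcal{R}^\gamma(\mathscr{T})$ is defined in the same way with Gaussians. For an operator $A\in\mathcal{L}(X,Y)$, $C_2(A)$ (Rademacher cotype 2 constant) is the least $C$ such that $(\sum_{n=1}^k\|Ax_n\|^2)^{1/2}\le C\|\sum_{n=1}^k r_nx_n\|_{L^2(\Omega;X)}$ for all $k$ and $x_1,\dots,x_k\in X$; $C_2^\gamma(A)$ is defined identically with $(\gamma_n)$ in place of $(r_n)$. *)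

theory Defs
  imports "HOL-Probability.Probability"
begin

definition rad_avg :: "nat \<Rightarrow> ((nat \<Rightarrow> real) \<Rightarrow> real) \<Rightarrow> real" where
  "rad_avg k f = (\<Sum>\<epsilon>\<in>PiE {..<k} (\<lambda>_. {-1, 1::real}). f \<epsilon>) / 2 ^ k"

definition gauss_avg :: "nat \<Rightarrow> ((nat \<Rightarrow> real) \<Rightarrow> real) \<Rightarrow> real" where
  "gauss_avg k f = integral\<^sup>L (PiM {..<k} (\<lambda>_. density lborel std_normal_density)) f"

definition supnorm :: "real ^ 'i::finite \<Rightarrow> real" where
  "supnorm x = Max (range (\<lambda>i. \<bar>x $ i\<bar>))"

text \<open>R-bound (avg = rad_avg) or gamma-bound (avg = gauss_avg) of a family of operators,
  w.r.t. norms nX on X and nY on Y: the least admissible constant.\<close>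
definition R_bound ::
  "(nat \<Rightarrow> ((nat \<Rightarrow> real) \<Rightarrow> real) \<Rightarrow> real) \<Rightarrow> ('x::real_vector \<Rightarrow> real) \<Rightarrow>
   ('y::real_vector \<Rightarrow> real) \<Rightarrow> ('x \<Rightarrow> 'y) set \<Rightarrow> real" where
  "R_bound avg nX nY \<T> = Inf {C. 0 \<le> C \<and>
     (\<forall>k (S :: nat \<Rightarrow> 'x \<Rightarrow> 'y) (x :: nat \<Rightarrow> 'x). (\<forall>j<k. S j \<in> \<T>) \<longrightarrow>
        sqrt (avg k (\<lambda>\<epsilon>. (nY (\<Sum>j<k. \<epsilon> j *\<^sub>R S j (x j)))\<^sup>2))
        \<le> C * sqrt (avg k (\<lambda>\<epsilon>. (nX (\<Sum>j<k. \<epsilon> j *\<^sub>R x j))\<^sup>2)))}"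

definition cotype2_const ::
  "(nat \<Rightarrow> ((nat \<Rightarrow> real) \<Rightarrow> real) \<Rightarrow> real) \<Rightarrow> ('x::real_vector \<Rightarrow> real) \<Rightarrow>
   ('y::real_vector \<Rightarrow> real) \<Rightarrow> ('x \<Rightarrow> 'y) \<Rightarrow> real" where
  "cotype2_const avg nX nY A = Inf {C. 0 \<le> C \<and>
     (\<forall>k (x :: nat \<Rightarrow> 'x).
        sqrt (\<Sum>j<k. (nY (A (x j)))\<^sup>2)
        \<le> C * sqrt (avg k (\<lambda>\<epsilon>. (nX (\<Sum>j<k. \<epsilon> j *\<^sub>R x j))\<^sup>2)))}"

end

theory Submission
  imports Defs
begin

(*
  For scalar-valued operators the Rademacher (resp. Gaussian) average on the
  left of the R-bound inequality is an l^2 sum: the random signs (resp. standard Gaussians)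
  are orthonormal, so  E |\<Sum>j \<epsilon>_j a_j|^2 = \<Sum>j a_j^2.  Hence a constant C is admissible for
  the R-bound of {T_n} iff  (\<Sum>j |S_j x_j|^2)^(1/2) \<le> C (E \<parallel>\<Sum> \<epsilon>_j x_j\<parallel>^2)^(1/2)  for all choices
  S_j \<in> {T_n}; choosing for each x_j an index where |T_n x_j| is maximal, this is exactly
  the cotype-2 inequality for A x = (T_n x)_n with the sup norm on l^\<infinity>_N.
*)

definition orthonormal_avg :: "(nat \<Rightarrow> ((nat \<Rightarrow> real) \<Rightarrow> real) \<Rightarrow> real) \<Rightarrow> bool" where
  "orthonormal_avg avg \<longleftrightarrow>
     (\<forall>k a. avg k (\<lambda>\<epsilon>. (\<Sum>j<k. \<epsilon> j * a j)\<^sup>2) = (\<Sum>j<k. (a j)\<^sup>2))"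

text \<open>The product  \<epsilon>_i \<epsilon>_j  written as a monomial  \<Prod>l \<epsilon>_l ^ (pair_exponent i j l), so that
  mixed moments of independent variables factorise over the coordinates.\<close>
definition pair_exponent :: "nat \<Rightarrow> nat \<Rightarrow> nat \<Rightarrow> nat" where
  "pair_exponent i j l = (if l = i then 1 else 0) + (if l = j then 1 else 0)"

lemma prod_pair_exponent:
  fixes e :: "nat \<Rightarrow> real"
  assumes "i < k" "j < k"
  shows "(\<Prod>l<k. e l ^ pair_exponent i j l) = e i * e j"
proof -
  have "(\<Prod>l<k. e l ^ pair_exponent i j l) = (\<Prod>l\<in>{i,j}. e l ^ pair_exponent i j l)"
    using assms by (intro prod.mono_neutral_right) (auto simp: pair_exponent_def)
  then show ?thesis
    by (cases "i = j") (auto simp: pair_exponent_def power2_eq_square)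
qed

lemma prod_moments_pair_exponent:
  fixes m :: "nat \<Rightarrow> real"
  assumes "m 0 = 1" "m 1 = 0" "m 2 = 1" "i < k" "j < k"
  shows "(\<Prod>l<k. m (pair_exponent i j l)) = (if i = j then 1 else 0)"
proof -
  have "(\<Prod>l<k. m (pair_exponent i j l)) = (\<Prod>l\<in>{i,j}. m (pair_exponent i j l))"
    using assms by (intro prod.mono_neutral_right) (auto simp: pair_exponent_def)
  then show ?thesis
    using assms by (cases "i = j") (auto simp: pair_exponent_def numeral_2_eq_2)
qed

lemma square_sum_expand:
  fixes e a :: "nat \<Rightarrow> real"
  shows "(\<Sum>j<k. e j * a j)\<^sup>2
       = (\<Sum>i<k. \<Sum>j<k. a i * a j * (\<Prod>l<k. e l ^ pair_exponent i j l))"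
proof -
  have "(\<Sum>j<k. e j * a j)\<^sup>2 = (\<Sum>i<k. \<Sum>j<k. a i * a j * (e i * e j))"
    by (simp add: power2_eq_square sum_product algebra_simps)
  also have "\<dots> = (\<Sum>i<k. \<Sum>j<k. a i * a j * (\<Prod>l<k. e l ^ pair_exponent i j l))"
    by (intro sum.cong refl) (simp add: prod_pair_exponent)
  finally show ?thesis .
qed

lemma double_sum_kronecker:
  fixes a :: "nat \<Rightarrow> real"
  shows "(\<Sum>i<k. \<Sum>j<k. a i * a j * (if i = j then 1 else 0)) = (\<Sum>j<k. (a j)\<^sup>2)"
  by (simp add: power2_eq_square if_distrib cong: if_cong)

text \<open>Random signs are orthonormal: the mixed moments are computed by factorising the sum
  over {-1,1}^k into a product of one-dimensional sums.\<close>
lemma orthonormal_rad_avg: "orthonormal_avg rad_avg"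
  unfolding orthonormal_avg_def
proof (intro allI)
  fix k :: nat and a :: "nat \<Rightarrow> real"
  define sign_moment :: "nat \<Rightarrow> real" where "sign_moment c = (\<Sum>y\<in>{-1,1::real}. y ^ c) / 2" for c
  have mixed_moment: "(\<Sum>\<epsilon>\<in>PiE {..<k} (\<lambda>_. {-1, 1::real}). \<Prod>l<k. \<epsilon> l ^ pair_exponent i j l)
      = 2 ^ k * (if i = j then 1 else 0)" if "i < k" "j < k" for i j
  proof -
    have "(\<Sum>\<epsilon>\<in>PiE {..<k} (\<lambda>_. {-1, 1::real}). \<Prod>l<k. \<epsilon> l ^ pair_exponent i j l)
        = (\<Prod>l<k. \<Sum>y\<in>{-1,1::real}. y ^ pair_exponent i j l)"
      by (rule prod_sum_PiE[symmetric]) auto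
    also have "\<dots> = (\<Prod>l<k. 2 * sign_moment (pair_exponent i j l))"
      by (intro prod.cong) (auto simp: sign_moment_def)
    also have "\<dots> = 2 ^ k * (\<Prod>l<k. sign_moment (pair_exponent i j l))"
      by (simp add: prod.distrib)
    also have "(\<Prod>l<k. sign_moment (pair_exponent i j l)) = (if i = j then 1 else 0)"
      using that by (intro prod_moments_pair_exponent) (auto simp: sign_moment_def)
    finally show ?thesis .
  qed
  have "rad_avg k (\<lambda>\<epsilon>. (\<Sum>j<k. \<epsilon> j * a j)\<^sup>2)
      = (\<Sum>i<k. \<Sum>j<k. a i * a j *
           ((\<Sum>\<epsilon>\<in>PiE {..<k} (\<lambda>_. {-1, 1::real}). \<Prod>l<k. \<epsilon> l ^ pair_exponent i j l) / 2 ^ k))"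
    unfolding rad_avg_def square_sum_expand
    by (simp add: sum_distrib_left sum_divide_distrib sum.swap[of _ "PiE _ _"] mult.assoc)
  also have "\<dots> = (\<Sum>i<k. \<Sum>j<k. a i * a j * (if i = j then 1 else 0))"
    by (intro sum.cong refl) (simp add: mixed_moment)
  finally show "rad_avg k (\<lambda>\<epsilon>. (\<Sum>j<k. \<epsilon> j * a j)\<^sup>2) = (\<Sum>j<k. (a j)\<^sup>2)"
    by (simp add: double_sum_kronecker)
qed

text \<open>Independent standard Gaussians are orthonormal: the mixed moments factorise by
  Fubini on the product measure, and the standard normal moments of orders 0, 1, 2 are 1, 0, 1.\<close>
lemma orthonormal_gauss_avg: "orthonormal_avg gauss_avg"
  unfolding orthonormal_avg_def
proof (intro allI)
  fix k :: nat and a :: "nat \<Rightarrow> real"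
  define G where "G = density lborel std_normal_density"
  interpret G: prob_space G unfolding G_def by (rule prob_space_normal_density) simp
  interpret PG: product_prob_space "\<lambda>_. G" "{..<k}" by unfold_locales
  define normal_moment where "normal_moment c = integral\<^sup>L G (\<lambda>t. t ^ c)" for c
  have integral_G: "integral\<^sup>L G f = integral\<^sup>L lborel (\<lambda>x. std_normal_density x * f x)"
    if "f \<in> borel_measurable borel" for f :: "real \<Rightarrow> real"
    unfolding G_def using that by (subst integral_density) (auto simp: normal_density_nonneg)
  have integrable_power: "integrable G (\<lambda>t. t ^ c)" for c
    unfolding G_def
    by (subst integrable_density) (auto simp: normal_density_nonneg integrable_std_normal_moment)
  have moment0: "normal_moment 0 = 1" unfolding normal_moment_def by (simp add: G.prob_space)
  have moment1: "normal_moment 1 = 0"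
    unfolding normal_moment_def using integral_std_normal_moment_odd[of 0]
    by (subst integral_G) auto
  have moment2: "normal_moment 2 = 1"
    unfolding normal_moment_def using integral_std_normal_moment_even[of 1]
    by (subst integral_G) auto
  have mixed_moment:
    "integral\<^sup>L (PiM {..<k} (\<lambda>_. G)) (\<lambda>x. \<Prod>l<k. x l ^ pair_exponent i j l)
       = (if i = j then 1 else 0)" if "i < k" "j < k" for i j
  proof -
    have "integral\<^sup>L (PiM {..<k} (\<lambda>_. G)) (\<lambda>x. \<Prod>l<k. x l ^ pair_exponent i j l)
        = (\<Prod>l<k. normal_moment (pair_exponent i j l))"
      unfolding normal_moment_def
      by (rule PG.product_integral_prod) (auto intro: integrable_power)
    also have "\<dots> = (if i = j then 1 else 0)"
      using that moment0 moment1 moment2 by (intro prod_moments_pair_exponent) auto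
    finally show ?thesis .
  qed
  have integrable_monomial:
    "integrable (PiM {..<k} (\<lambda>_. G)) (\<lambda>x. \<Prod>l<k. x l ^ pair_exponent i j l)" for i j
    by (rule PG.product_integrable_prod) (auto intro: integrable_power)
  have "gauss_avg k (\<lambda>\<epsilon>. (\<Sum>j<k. \<epsilon> j * a j)\<^sup>2)
     = (\<Sum>i<k. \<Sum>j<k. a i * a j *
          integral\<^sup>L (PiM {..<k} (\<lambda>_. G)) (\<lambda>x. \<Prod>l<k. x l ^ pair_exponent i j l))"
    unfolding gauss_avg_def square_sum_expand G_def[symmetric]
    using integrable_monomial by (simp add: integral_sum integrable_sum)
  also have "\<dots> = (\<Sum>i<k. \<Sum>j<k. a i * a j * (if i = j then 1 else 0))"
    by (intro sum.cong refl) (simp add: mixed_moment)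
  finally show "gauss_avg k (\<lambda>\<epsilon>. (\<Sum>j<k. \<epsilon> j * a j)\<^sup>2) = (\<Sum>j<k. (a j)\<^sup>2)"
    by (simp add: double_sum_kronecker)
qed

lemma abs_le_supnorm:
  fixes T :: "'n::finite \<Rightarrow> 'a \<Rightarrow> real"
  shows "\<bar>T n y\<bar> \<le> supnorm (\<chi> n. T n y)"
  unfolding supnorm_def by (rule Max_ge) auto

lemma supnorm_attained:
  fixes T :: "'n::finite \<Rightarrow> 'a \<Rightarrow> real"
  shows "\<exists>n. supnorm (\<chi> n. T n y) = \<bar>T n y\<bar>"
proof -
  have "Max (range (\<lambda>n. \<bar>T n y\<bar>)) \<in> range (\<lambda>n. \<bar>T n y\<bar>)"
    by (rule Max_in) auto
  then obtain n where "Max (range (\<lambda>n. \<bar>T n y\<bar>)) = \<bar>T n y\<bar>" by blast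
  then show ?thesis unfolding supnorm_def by auto
qed

text \<open>Pointwise form of the theorem: for any right-hand side B, bounding the l^2 sum of
  |S_j x_j| for all choices S_j from the family is the same as bounding the l^2 sum of the
  sup norms of (T_n x_j)_n, because the worst choice picks a maximising index for each x_j.\<close>
lemma family_bound_iff_supnorm_bound:
  fixes T :: "'n::finite \<Rightarrow> 'x \<Rightarrow> real" and B :: "nat \<Rightarrow> (nat \<Rightarrow> 'x) \<Rightarrow> real"
  shows "(\<forall>k (S :: nat \<Rightarrow> 'x \<Rightarrow> real) x. (\<forall>j<k. S j \<in> range T) \<longrightarrow>
            sqrt (\<Sum>j<k. (S j (x j))\<^sup>2) \<le> C * B k x)
     \<longleftrightarrow> (\<forall>k x. sqrt (\<Sum>j<k. (supnorm (\<chi> n. T n (x j)))\<^sup>2) \<le> C * B k x)"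
proof (intro iffI allI impI)
  fix k and x :: "nat \<Rightarrow> 'x"
  assume family_bound: "\<forall>k (S :: nat \<Rightarrow> 'x \<Rightarrow> real) x. (\<forall>j<k. S j \<in> range T) \<longrightarrow>
            sqrt (\<Sum>j<k. (S j (x j))\<^sup>2) \<le> C * B k x"
  obtain best where best: "\<And>y. supnorm (\<chi> n. T n y) = \<bar>T (best y) y\<bar>"
    using supnorm_attained[of T] by metis
  have "sqrt (\<Sum>j<k. (supnorm (\<chi> n. T n (x j)))\<^sup>2) = sqrt (\<Sum>j<k. (T (best (x j)) (x j))\<^sup>2)"
    by (simp add: best)
  also have "\<dots> \<le> C * B k x"
    using family_bound[rule_format, of k "\<lambda>j. T (best (x j))" x] by auto
  finally show "sqrt (\<Sum>j<k. (supnorm (\<chi> n. T n (x j)))\<^sup>2) \<le> C * B k x" .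
next
  fix k and S :: "nat \<Rightarrow> 'x \<Rightarrow> real" and x
  assume supnorm_bound: "\<forall>k x. sqrt (\<Sum>j<k. (supnorm (\<chi> n. T n (x j)))\<^sup>2) \<le> C * B k x"
    and S: "\<forall>j<k. S j \<in> range T"
  have "\<bar>S j (x j)\<bar> \<le> supnorm (\<chi> n. T n (x j))" if "j < k" for j
    using S that abs_le_supnorm by (metis rangeE)
  then have "(S j (x j))\<^sup>2 \<le> (supnorm (\<chi> n. T n (x j)))\<^sup>2" if "j < k" for j
    using that by (metis abs_ge_zero power2_abs power_mono)
  then have "sqrt (\<Sum>j<k. (S j (x j))\<^sup>2) \<le> sqrt (\<Sum>j<k. (supnorm (\<chi> n. T n (x j)))\<^sup>2)"
    by (intro real_sqrt_le_mono sum_mono) auto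
  also have "\<dots> \<le> C * B k x" using supnorm_bound by blast
  finally show "sqrt (\<Sum>j<k. (S j (x j))\<^sup>2) \<le> C * B k x" .
qed

text \<open>Neither linearity nor the particular norm on X plays a role.\<close>
lemma R_bound_functionals_eq_cotype2_const:
  fixes T :: "'n::finite \<Rightarrow> 'x::real_vector \<Rightarrow> real" and nX :: "'x \<Rightarrow> real"
  assumes "orthonormal_avg avg"
  shows "R_bound avg nX abs (range T) = cotype2_const avg nX supnorm (\<lambda>x. \<chi> n. T n x)"
proof -
  have scalar_average:
    "sqrt (avg k (\<lambda>\<epsilon>. \<bar>\<Sum>j<k. \<epsilon> j *\<^sub>R S j (x j)\<bar>\<^sup>2)) = sqrt (\<Sum>j<k. (S j (x j))\<^sup>2)"
    for k and S :: "nat \<Rightarrow> 'x \<Rightarrow> real" and x :: "nat \<Rightarrow> 'x"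
    using assms unfolding orthonormal_avg_def by simp
  define B where "B k x = sqrt (avg k (\<lambda>\<epsilon>. (nX (\<Sum>j<k. \<epsilon> j *\<^sub>R x j))\<^sup>2))"
    for k and x :: "nat \<Rightarrow> 'x"
  show ?thesis
    unfolding R_bound_def cotype2_const_def scalar_average B_def[symmetric]
      family_bound_iff_supnorm_bound ..
qed

theorem mainTheorem3:
  fixes T :: "'n::finite \<Rightarrow> real ^ 'm::finite \<Rightarrow> real"
  assumes "\<And>n. linear (T n)"
  shows "R_bound rad_avg supnorm abs (range T)
           = cotype2_const rad_avg supnorm supnorm (\<lambda>x. \<chi> n. T n x)
       \<and> R_bound gauss_avg supnorm abs (range T)
           = cotype2_const gauss_avg supnorm supnorm (\<lambda>x. \<chi> n. T n x)"
  using R_bound_functionals_eq_cotype2_const[OF orthonormal_rad_avg, where nX = supnorm and T = T]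
        R_bound_functionals_eq_cotype2_const[OF orthonormal_gauss_avg, where nX = supnorm and T = T]
  by (intro conjI)

end
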